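(* Let $\delta,\delta^\perp$ be positive integers and define $$L_1=\{N\in\Delta(s_1,\dots,s_m)\mid D(N)\ge\delta\},\qquad L_2=\{N\in\Delta(s_1,\dots,s_m)\mid D^\perp(N)<\delta^\perp\}.$$ Suppose $L_2\subsetneq L_1$. Then $C(L_2)\subsetneq C(L_1)$ have codimension $\ell=\#L_1-\#L_2$, and $$M_1(C(L_1),C(L_2))\ge\delta,\qquad M_1(C(L_2)^\perp,C(L_1)^\perp)\ge\delta^\perp.$$
   Context: $q$ is a prime power. For $i=1,\dots,m$, $S_i\subseteq\mathbb{F}_q$ is nonempty with $s_i=\#S_i$; $S=S_1\times\cdots\times S_m=\{\alpha_1,\dots,\alpha_n\}$, $n=\prod_i s_i$. $\Delta(s_1,\dots,s_m)=\{X_1^{i_1}\cdots X_m^{i_m}\mid 0\le i_t<s_t\}$. For $L\subseteq\Delta(s_1,\dots,s_m)$, $C(L)\subseteq\mathbb{F}_q^n$ is the span of $(N(\alpha_1),\dots,N(\alpha_n))$, $N\in L$. For $N=X_1^{i_1}\cdots X_m^{i_m}$: $D(N)=\prod_t(s_t-i_t)$, $D^\perp(N)=\prod_t(i_t+1)$. $C^\perp$ is the Euclidean dual. For linear codes $C_2\subsetneq C_1$, $M_1(C_1,C_2)=\min\{w_H(\vec c)\mid\vec c\in C_1\setminus C_2\}$ (Hamming weight). *)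

theory Defs
  imports Complex_Main "HOL-Library.Function_Algebras"
begin

text \<open>Points of S = S_0 x ... x S_(m-1) are functions nat => 'a, extensional outside {..<m}.
Monomials X^e are exponent vectors e :: nat => nat, zero outside {..<m}.
Vectors of F_q^n are functions on the point set, taken to be 0 outside it.\<close>

definition points :: "nat \<Rightarrow> (nat \<Rightarrow> 'a::zero set) \<Rightarrow> (nat \<Rightarrow> 'a) set" where
  "points m S = {\<alpha>. (\<forall>i<m. \<alpha> i \<in> S i) \<and> (\<forall>i\<ge>m. \<alpha> i = 0)}"

definition Delta :: "nat \<Rightarrow> (nat \<Rightarrow> nat) \<Rightarrow> (nat \<Rightarrow> nat) set" where
  "Delta m s = {e. (\<forall>i<m. e i < s i) \<and> (\<forall>i\<ge>m. e i = 0)}"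

definition evalMon :: "nat \<Rightarrow> (nat \<Rightarrow> nat) \<Rightarrow> (nat \<Rightarrow> 'a::comm_ring_1) \<Rightarrow> 'a" where
  "evalMon m e \<alpha> = (\<Prod>i<m. \<alpha> i ^ e i)"

definition Dmin :: "nat \<Rightarrow> (nat \<Rightarrow> nat) \<Rightarrow> (nat \<Rightarrow> nat) \<Rightarrow> nat" where
  "Dmin m s e = (\<Prod>i<m. s i - e i)"

definition Dperp :: "nat \<Rightarrow> (nat \<Rightarrow> nat) \<Rightarrow> nat" where
  "Dperp m e = (\<Prod>i<m. e i + 1)"

definition code :: "nat \<Rightarrow> (nat \<Rightarrow> 'a::field set) \<Rightarrow> (nat \<Rightarrow> nat) set \<Rightarrow> ((nat \<Rightarrow> 'a) \<Rightarrow> 'a) set" where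
  "code m S L = {v. \<exists>c :: (nat \<Rightarrow> nat) \<Rightarrow> 'a.
      v = (\<lambda>\<alpha>. if \<alpha> \<in> points m S then (\<Sum>N\<in>L. c N * evalMon m N \<alpha>) else 0)}"

definition dual_code :: "'b set \<Rightarrow> ('b \<Rightarrow> 'a::field) set \<Rightarrow> ('b \<Rightarrow> 'a) set" where
  "dual_code P C = {v. (\<forall>x. x \<notin> P \<longrightarrow> v x = 0) \<and> (\<forall>c\<in>C. (\<Sum>x\<in>P. v x * c x) = 0)}"

definition hamming_wt :: "'b set \<Rightarrow> ('b \<Rightarrow> 'a::zero) \<Rightarrow> nat" where
  "hamming_wt P v = card {x\<in>P. v x \<noteq> 0}"

definition M1 :: "'b set \<Rightarrow> ('b \<Rightarrow> 'a::zero) set \<Rightarrow> ('b \<Rightarrow> 'a) set \<Rightarrow> nat" where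
  "M1 P C1 C2 = Min (hamming_wt P ` (C1 - C2))"

definition vscale :: "'a::field \<Rightarrow> ('b \<Rightarrow> 'a) \<Rightarrow> ('b \<Rightarrow> 'a)" where
  "vscale a v = (\<lambda>x. a * v x)"

definition vdim :: "('b \<Rightarrow> 'a::field) set \<Rightarrow> nat" where
  "vdim C = vector_space.dim (vscale :: 'a \<Rightarrow> ('b \<Rightarrow> 'a) \<Rightarrow> ('b \<Rightarrow> 'a)) C"

end

theory Submission
  imports Defs "HOL-Computational_Algebra.Polynomial" "HOL-Library.FuncSet"
begin

text \<open>
  A codeword of \<open>C(L)\<close> is the evaluation on \<open>S\<close> of a polynomial with monomials in \<open>L \<subseteq> \<Delta>\<close>.
  Footprint bound: if such a polynomial is nonzero, some monomial \<open>N\<close> of its support has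
  \<open>D(N)\<close> at most its number of nonzeros on \<open>S\<close>. This follows by induction on \<open>m\<close>: with \<open>t\<close> the
  top power of \<open>X_m\<close>, every slice on which the coefficient of \<open>X_m^t\<close> is nonzero is a
  univariate polynomial of degree \<open>t\<close>, nonzero on at least \<open>s_m - t\<close> points of \<open>S_m\<close>.
  It makes evaluation injective on \<open>\<Delta>\<close>, so \<open>dim C(L) = #L\<close>, and bounds the weights in
  \<open>C(L_1) - C(L_2)\<close> below by \<open>\<delta>\<close>.
  Dually, a nonzero \<open>v\<close> is not orthogonal to the evaluation of some \<open>N \<in> \<Delta>\<close> with
  \<open>D\<^sup>\<perp>(N) \<le> wt(v)\<close>: restrict \<open>v\<close> to its lightest nonzero slice \<open>X_m = b\<close>, use induction, and
  separate the slices by a Vandermonde argument. Such an \<open>N\<close> lies outside \<open>L_2\<close> when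
  \<open>v \<in> C(L_2)\<^sup>\<perp>\<close>, which gives the second bound. The same fact makes the transposed
  evaluation map injective, hence onto by counting, so \<open>C(L_2)\<^sup>\<perp> - C(L_1)\<^sup>\<perp>\<close> is nonempty.
\<close>

section \<open>Product grids\<close>

definition grid :: "nat \<Rightarrow> (nat \<Rightarrow> 'b set) \<Rightarrow> 'b \<Rightarrow> (nat \<Rightarrow> 'b) set" where
  "grid m A d = {f. (\<forall>i<m. f i \<in> A i) \<and> (\<forall>i\<ge>m. f i = d)}"

lemma points_eq_grid: "points m S = grid m S 0"
  by (simp add: points_def grid_def)

lemma Delta_eq_grid: "Delta m s = grid m (\<lambda>i. {..<s i}) 0"
  by (simp add: Delta_def grid_def)

lemma grid_0 [simp]: "grid 0 A d = {\<lambda>_. d}"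
  by (auto simp: grid_def)

lemma bij_betw_grid_Suc:
  "bij_betw (\<lambda>(f, b). f(m := b)) (grid m A d \<times> A m) (grid (Suc m) A d)"
proof (rule bij_betw_byWitness[where f' = "\<lambda>g. (g(m := d), g m)"])
  show "\<forall>x\<in>grid m A d \<times> A m. (\<lambda>g. (g(m := d), g m)) ((\<lambda>(f, b). f(m := b)) x) = x"
    by (auto simp: grid_def fun_eq_iff)
  show "(\<lambda>(f, b). f(m := b)) ` (grid m A d \<times> A m) \<subseteq> grid (Suc m) A d"
    by (auto simp: grid_def less_Suc_eq)
  show "(\<lambda>g. (g(m := d), g m)) ` grid (Suc m) A d \<subseteq> grid m A d \<times> A m"
    by (auto simp: grid_def)
qed auto

lemma sum_grid_Suc:
  "sum h (grid (Suc m) A d) = (\<Sum>f\<in>grid m A d. \<Sum>b\<in>A m. h (f(m := b)))"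
proof -
  have "sum h (grid (Suc m) A d) = (\<Sum>(f, b)\<in>grid m A d \<times> A m. h (f(m := b)))"
    using sum.reindex_bij_betw[OF bij_betw_grid_Suc, of h] by (simp add: case_prod_beta')
  then show ?thesis
    by (simp add: sum.cartesian_product)
qed

lemma finite_grid:
  assumes "\<And>i. i < m \<Longrightarrow> finite (A i)"
  shows "finite (grid m A d)"
  using assms
proof (induction m)
  case (Suc m)
  have "finite (grid m A d)" "finite (A m)"
    using Suc.IH Suc.prems by simp_all
  then show ?case
    using bij_betw_finite[OF bij_betw_grid_Suc] finite_cartesian_product by metis
qed simp

lemma card_grid:
  assumes "\<And>i. i < m \<Longrightarrow> finite (A i)"
  shows "card (grid m A d) = (\<Prod>i<m. card (A i))"
  using assms
proof (induction m)
  case (Suc m)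
  have "card (grid (Suc m) A d) = card (grid m A d \<times> A m)"
    using bij_betw_same_card[OF bij_betw_grid_Suc] by metis
  then show ?case
    using Suc.IH Suc.prems by (simp add: card_cartesian_product)
qed simp

lemma card_filter_eq_sum_of_bool: "finite A \<Longrightarrow> card {x \<in> A. Q x} = (\<Sum>x\<in>A. of_bool (Q x))"
  by (simp add: Collect_conj_eq Int_commute)

lemma card_filter_grid_Suc:
  assumes "\<And>i. i \<le> m \<Longrightarrow> finite (A i)"
  shows "card {x \<in> grid (Suc m) A d. Q x} = (\<Sum>f\<in>grid m A d. card {b \<in> A m. Q (f(m := b))})"
proof -
  have fin: "finite (grid (Suc m) A d)" "finite (A m)"
    using assms by (auto intro!: finite_grid)
  have "card {x \<in> grid (Suc m) A d. Q x} = (\<Sum>f\<in>grid m A d. \<Sum>b\<in>A m. of_bool (Q (f(m := b))))"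
    unfolding card_filter_eq_sum_of_bool[OF fin(1)] by (rule sum_grid_Suc)
  then show ?thesis
    unfolding card_filter_eq_sum_of_bool[OF fin(2)] .
qed

section \<open>Univariate polynomials\<close>

lemma card_nonroots_ge:
  fixes p :: "'a::idom poly"
  assumes "p \<noteq> 0" "finite A"
  shows "card A - degree p \<le> card {b \<in> A. poly p b \<noteq> 0}"
proof -
  have "card A \<le> card ({b \<in> A. poly p b \<noteq> 0} \<union> {b. poly p b = 0})"
    using assms by (intro card_mono) (auto intro: poly_roots_finite)
  also have "\<dots> \<le> card {b \<in> A. poly p b \<noteq> 0} + card {b. poly p b = 0}"
    by (rule card_Un_le)
  finally show ?thesis
    using card_poly_roots_bound[OF assms(1)] by linarith
qed

lemma card_nonzeros_power_sum_ge:
  fixes a :: "nat \<Rightarrow> 'a::idom"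
  assumes "finite A" "t < n" "a t \<noteq> 0" "\<And>j. t < j \<Longrightarrow> j < n \<Longrightarrow> a j = 0"
  shows "card A - t \<le> card {b \<in> A. (\<Sum>j<n. a j * b ^ j) \<noteq> 0}"
proof -
  define p where "p = (\<Sum>j<n. monom (a j) j)"
  have coeff_p: "coeff p j = (if j < n then a j else 0)" for j
    by (simp add: p_def coeff_sum coeff_monom)
  have "p \<noteq> 0"
    using coeff_p[of t] assms(2,3) by auto
  moreover have "degree p \<le> t"
    by (rule degree_le) (simp add: coeff_p assms(4))
  moreover have "poly p b = (\<Sum>j<n. a j * b ^ j)" for b
    by (simp add: p_def poly_sum poly_monom)
  ultimately show ?thesis
    using card_nonroots_ge[of p A] assms(1) by auto
qed

lemma ex_power_sum_nonzero:
  fixes u :: "'a::field \<Rightarrow> 'a"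
  assumes R: "finite R" "b0 \<in> R" "u b0 \<noteq> 0"
  shows "\<exists>j<card R. (\<Sum>b\<in>R. b ^ j * u b) \<noteq> 0"
proof (rule ccontr)
  assume "\<not> ?thesis"
  then have moments: "(\<Sum>b\<in>R. b ^ j * u b) = 0" if "j < card R" for j
    using that by auto
  \<comment> \<open>\<open>g\<close> has degree below \<open>card R\<close> and vanishes on \<open>R\<close> except at \<open>b0\<close>.\<close>
  define g where "g = (\<Prod>c\<in>R - {b0}. [:-c, 1:])"
  have poly_g: "poly g b = (\<Prod>c\<in>R - {b0}. b - c)" for b
    by (simp add: g_def poly_prod)
  have "degree g \<le> card (R - {b0})"
    unfolding g_def using degree_prod_sum_le[of "R - {b0}" "\<lambda>c. [:-c, 1:]"] R by (simp add: o_def)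
  then have deg_g: "degree g < card R"
    using R card_Diff1_less[of R b0] by linarith
  have "(\<Sum>b\<in>R. poly g b * u b) = (\<Sum>i\<le>degree g. coeff g i * (\<Sum>b\<in>R. b ^ i * u b))"
    by (simp add: poly_altdef sum_distrib_left sum_distrib_right mult_ac sum.swap[of _ R])
  also have "\<dots> = 0"
    using moments deg_g by simp
  finally have "(\<Sum>b\<in>R. poly g b * u b) = 0" .
  moreover have "(\<Sum>b\<in>R. poly g b * u b) = (\<Sum>b\<in>{b0}. poly g b * u b)"
    using R by (intro sum.mono_neutral_right) (auto simp: poly_g prod_zero_iff)
  moreover have "poly g b0 \<noteq> 0"
    using R by (simp add: poly_g prod_zero_iff)
  ultimately show False
    using R(3) by simp
qed

section \<open>Footprint bounds\<close>

lemma evalMon_upd: "evalMon (Suc m) (e(m := j)) (\<alpha>(m := b)) = evalMon m e \<alpha> * b ^ j"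
proof -
  have "evalMon m (e(m := j)) (\<alpha>(m := b)) = evalMon m e \<alpha>"
    unfolding evalMon_def by (rule prod.cong) auto
  then show ?thesis
    by (simp add: evalMon_def)
qed

lemma Dmin_upd: "Dmin (Suc m) s (e(m := j)) = Dmin m s e * (s m - j)"
proof -
  have "Dmin m s (e(m := j)) = Dmin m s e"
    unfolding Dmin_def by (rule prod.cong) auto
  then show ?thesis
    by (simp add: Dmin_def)
qed

lemma Dperp_upd: "Dperp (Suc m) (e(m := j)) = Dperp m e * (j + 1)"
proof -
  have "Dperp m (e(m := j)) = Dperp m e"
    unfolding Dperp_def by (rule prod.cong) auto
  then show ?thesis
    by (simp add: Dperp_def)
qed

lemma Dmin_pos: "N \<in> Delta m s \<Longrightarrow> 0 < Dmin m s N"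
  unfolding Dmin_def Delta_def by (auto intro: prod_pos)

lemma Delta_SucD: "N \<in> Delta (Suc m) s \<Longrightarrow> N(m := 0) \<in> Delta m s \<and> N m < s m"
  by (auto simp: Delta_def)

lemma Delta_SucI: "e \<in> Delta m s \<Longrightarrow> j < s m \<Longrightarrow> e(m := j) \<in> Delta (Suc m) s"
  by (auto simp: Delta_def)

lemma points_SucD: "\<alpha> \<in> points (Suc m) S \<Longrightarrow> \<alpha>(m := 0) \<in> points m S \<and> \<alpha> m \<in> S m"
  by (auto simp: points_def)

lemma sum_Delta_Suc_evalMon:
  "(\<Sum>N\<in>Delta (Suc m) s. c N * evalMon (Suc m) N (\<alpha>(m := b)))
     = (\<Sum>j<s m. (\<Sum>e\<in>Delta m s. c (e(m := j)) * evalMon m e \<alpha>) * b ^ j)"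
proof -
  have "(\<Sum>N\<in>Delta (Suc m) s. c N * evalMon (Suc m) N (\<alpha>(m := b)))
      = (\<Sum>e\<in>Delta m s. \<Sum>j<s m. c (e(m := j)) * evalMon (Suc m) (e(m := j)) (\<alpha>(m := b)))"
    unfolding Delta_eq_grid by (rule sum_grid_Suc)
  then show ?thesis
    by (simp add: evalMon_upd sum_distrib_right mult.assoc sum.swap[of _ "Delta m s"])
qed

lemma sum_points_Suc_evalMon:
  "(\<Sum>\<alpha>\<in>points (Suc m) S. v \<alpha> * evalMon (Suc m) (e(m := j)) \<alpha>)
     = (\<Sum>b\<in>S m. b ^ j * (\<Sum>\<alpha>\<in>points m S. v (\<alpha>(m := b)) * evalMon m e \<alpha>))"
proof -
  have "(\<Sum>\<alpha>\<in>points (Suc m) S. v \<alpha> * evalMon (Suc m) (e(m := j)) \<alpha>)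
      = (\<Sum>\<alpha>\<in>points m S. \<Sum>b\<in>S m. v (\<alpha>(m := b)) * evalMon (Suc m) (e(m := j)) (\<alpha>(m := b)))"
    unfolding points_eq_grid by (rule sum_grid_Suc)
  then show ?thesis
    by (simp add: evalMon_upd sum_distrib_left mult_ac sum.swap[of _ "points m S"])
qed

lemma finite_points: "(\<And>i. i < m \<Longrightarrow> finite (S i)) \<Longrightarrow> finite (points m S)"
  unfolding points_eq_grid by (rule finite_grid)

lemma hamming_wt_points_Suc:
  assumes "\<And>i. i \<le> m \<Longrightarrow> finite (S i)"
  shows "hamming_wt (points (Suc m) S) v = (\<Sum>\<alpha>\<in>points m S. card {b \<in> S m. v (\<alpha>(m := b)) \<noteq> 0})"
  unfolding hamming_wt_def points_eq_grid by (rule card_filter_grid_Suc[OF assms])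

lemma hamming_wt_points_Suc_slices:
  assumes "\<And>i. i \<le> m \<Longrightarrow> finite (S i)"
  shows "hamming_wt (points (Suc m) S) v = (\<Sum>b\<in>S m. hamming_wt (points m S) (\<lambda>\<alpha>. v (\<alpha>(m := b))))"
proof -
  have fin: "finite (points m S)" "finite (S m)"
    using assms by (auto intro: finite_points)
  have "hamming_wt (points (Suc m) S) v
      = (\<Sum>\<alpha>\<in>points m S. \<Sum>b\<in>S m. of_bool (v (\<alpha>(m := b)) \<noteq> 0))"
    by (simp only: hamming_wt_points_Suc[OF assms] card_filter_eq_sum_of_bool[OF fin(2)])
  also have "\<dots> = (\<Sum>b\<in>S m. \<Sum>\<alpha>\<in>points m S. of_bool (v (\<alpha>(m := b)) \<noteq> 0))"
    by (rule sum.swap)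
  finally show ?thesis
    unfolding hamming_wt_def card_filter_eq_sum_of_bool[OF fin(1)] .
qed

lemma footprint_bound:
  fixes S :: "nat \<Rightarrow> 'a::field set"
  assumes "\<And>i. i < m \<Longrightarrow> finite (S i)" "\<And>i. i < m \<Longrightarrow> s i = card (S i)"
    and "N0 \<in> Delta m s" "c N0 \<noteq> 0"
  shows "\<exists>N\<in>Delta m s. c N \<noteq> 0 \<and>
           Dmin m s N \<le> hamming_wt (points m S) (\<lambda>\<alpha>. \<Sum>N\<in>Delta m s. c N * evalMon m N \<alpha>)"
  using assms
proof (induction m arbitrary: c N0)
  case 0
  then show ?case
    by (simp add: Delta_eq_grid points_eq_grid Dmin_def evalMon_def hamming_wt_def)
next
  case (Suc m)
  let ?f = "\<lambda>\<alpha>. \<Sum>N\<in>Delta (Suc m) s. c N * evalMon (Suc m) N \<alpha>"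
  define g where "g j \<alpha> = (\<Sum>e\<in>Delta m s. c (e(m := j)) * evalMon m e \<alpha>)" for j \<alpha>
  have fin: "\<And>i. i \<le> m \<Longrightarrow> finite (S i)" and card_Sm: "s m = card (S m)"
    using Suc.prems(1,2) by simp_all
  obtain t where t: "t < s m" "\<exists>e\<in>Delta m s. c (e(m := t)) \<noteq> 0"
    and above_t: "\<And>j e. t < j \<Longrightarrow> j < s m \<Longrightarrow> e \<in> Delta m s \<Longrightarrow> c (e(m := j)) = 0"
  proof -
    let ?P = "\<lambda>j. j < s m \<and> (\<exists>e\<in>Delta m s. c (e(m := j)) \<noteq> 0)"
    have "?P (N0 m)"
      using Delta_SucD[OF Suc.prems(3)] Suc.prems(4) by (metis fun_upd_triv fun_upd_upd)
    then obtain t where "?P t" "\<And>j. ?P j \<Longrightarrow> j \<le> t"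
      using Nat.ex_has_greatest_nat[of ?P "N0 m" "s m"] by auto
    then show thesis
      using that by (meson leD)
  qed
  then obtain e where e: "e \<in> Delta m s" "c (e(m := t)) \<noteq> 0"
    and Dmin_e: "Dmin m s e \<le> hamming_wt (points m S) (g t)"
    using Suc.IH[of _ "\<lambda>e. c (e(m := t))"] Suc.prems(1,2) unfolding g_def by force
  have fibre: "s m - t \<le> card {b \<in> S m. ?f (\<alpha>(m := b)) \<noteq> 0}" if "g t \<alpha> \<noteq> 0" for \<alpha>
    unfolding sum_Delta_Suc_evalMon g_def[symmetric] card_Sm
    by (rule card_nonzeros_power_sum_ge) (use fin t that above_t in \<open>auto simp: g_def card_Sm[symmetric]\<close>)
  let ?A = "{\<alpha> \<in> points m S. g t \<alpha> \<noteq> 0}"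
  have "Dmin (Suc m) s (e(m := t)) = Dmin m s e * (s m - t)"
    by (rule Dmin_upd)
  also have "\<dots> \<le> card ?A * (s m - t)"
    using Dmin_e by (simp add: hamming_wt_def)
  also have "\<dots> = (\<Sum>\<alpha>\<in>?A. s m - t)"
    by simp
  also have "\<dots> \<le> (\<Sum>\<alpha>\<in>?A. card {b \<in> S m. ?f (\<alpha>(m := b)) \<noteq> 0})"
    by (intro sum_mono fibre) simp
  also have "\<dots> \<le> (\<Sum>\<alpha>\<in>points m S. card {b \<in> S m. ?f (\<alpha>(m := b)) \<noteq> 0})"
    using Suc.prems(1) by (intro sum_mono2 finite_points) auto
  also have "\<dots> = hamming_wt (points (Suc m) S) ?f"
    by (rule hamming_wt_points_Suc[OF fin, symmetric])
  finally show ?case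
    using e t(1) Delta_SucI by blast
qed

lemma dual_footprint_bound:
  fixes S :: "nat \<Rightarrow> 'a::field set"
  assumes "\<And>i. i < m \<Longrightarrow> finite (S i)" "\<And>i. i < m \<Longrightarrow> s i = card (S i)"
    and "\<alpha>0 \<in> points m S" "v \<alpha>0 \<noteq> 0"
  shows "\<exists>e\<in>Delta m s. (\<Sum>\<alpha>\<in>points m S. v \<alpha> * evalMon m e \<alpha>) \<noteq> 0 \<and>
           Dperp m e \<le> hamming_wt (points m S) v"
  using assms
proof (induction m arbitrary: v \<alpha>0)
  case 0
  have points_0: "points 0 S = {\<lambda>_. 0}"
    by (simp add: points_eq_grid)
  have "{\<alpha> \<in> points 0 S. v \<alpha> \<noteq> 0} = points 0 S"
    using 0(3,4) by (auto simp: points_0)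
  then have "hamming_wt (points 0 S) v = 1"
    by (simp add: hamming_wt_def points_0)
  then show ?case
    using 0(3,4) by (auto simp: Delta_eq_grid points_0 Dperp_def evalMon_def)
next
  case (Suc m)
  have fin: "\<And>i. i \<le> m \<Longrightarrow> finite (S i)" and card_Sm: "s m = card (S m)"
    using Suc.prems(1,2) by simp_all
  define w where "w b = hamming_wt (points m S) (\<lambda>\<alpha>. v (\<alpha>(m := b)))" for b
  obtain b0 \<alpha>1 where b0: "b0 \<in> S m" "\<alpha>1 \<in> points m S" "v (\<alpha>1(m := b0)) \<noteq> 0"
    and b0_min: "\<And>b \<alpha>. b \<in> S m \<Longrightarrow> \<alpha> \<in> points m S \<Longrightarrow> v (\<alpha>(m := b)) \<noteq> 0 \<Longrightarrow> w b0 \<le> w b"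
  proof -
    let ?P = "\<lambda>b. b \<in> S m \<and> (\<exists>\<alpha>\<in>points m S. v (\<alpha>(m := b)) \<noteq> 0)"
    have "?P (\<alpha>0 m)"
      using points_SucD[OF Suc.prems(3)] Suc.prems(4) by (metis fun_upd_triv fun_upd_upd)
    then obtain b0 where "?P b0" "\<And>b. ?P b \<Longrightarrow> w b0 \<le> w b"
      using ex_has_least_nat[of ?P "\<alpha>0 m" w] by blast
    then show thesis
      using that by blast
  qed
  obtain e where e: "e \<in> Delta m s" "(\<Sum>\<alpha>\<in>points m S. v (\<alpha>(m := b0)) * evalMon m e \<alpha>) \<noteq> 0"
    and Dperp_e: "Dperp m e \<le> w b0"
    using Suc.IH[of \<alpha>1 "\<lambda>\<alpha>. v (\<alpha>(m := b0))"] Suc.prems(1,2) b0 unfolding w_def by force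
  define u where "u b = (\<Sum>\<alpha>\<in>points m S. v (\<alpha>(m := b)) * evalMon m e \<alpha>)" for b
  define R where "R = {b \<in> S m. u b \<noteq> 0}"
  have R: "finite R" "R \<subseteq> S m" "b0 \<in> R"
    using fin b0(1) e(2) by (auto simp: R_def u_def)
  have w_R: "w b0 \<le> w b" if "b \<in> R" for b
  proof -
    have "u b \<noteq> 0"
      using that by (simp add: R_def)
    then obtain \<alpha> where "\<alpha> \<in> points m S" "v (\<alpha>(m := b)) * evalMon m e \<alpha> \<noteq> 0"
      unfolding u_def by (rule sum.not_neutral_contains_not_neutral)
    then show ?thesis
      using b0_min that R(2) by auto
  qed
  obtain j where j: "j < card R" "(\<Sum>b\<in>R. b ^ j * u b) \<noteq> 0"
    using ex_power_sum_nonzero[OF R(1,3)] R(3) by (auto simp: R_def)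
  have "card R \<le> s m"
    using R(2) fin card_Sm by (simp add: card_mono)
  then have e_j: "e(m := j) \<in> Delta (Suc m) s"
    using Delta_SucI e(1) j(1) by simp
  have "(\<Sum>\<alpha>\<in>points (Suc m) S. v \<alpha> * evalMon (Suc m) (e(m := j)) \<alpha>) = (\<Sum>b\<in>S m. b ^ j * u b)"
    unfolding u_def by (rule sum_points_Suc_evalMon)
  also have "\<dots> = (\<Sum>b\<in>R. b ^ j * u b)"
    using fin by (intro sum.mono_neutral_right) (auto simp: R_def)
  finally have inner: "(\<Sum>\<alpha>\<in>points (Suc m) S. v \<alpha> * evalMon (Suc m) (e(m := j)) \<alpha>) \<noteq> 0"
    using j(2) by simp
  have "Dperp (Suc m) (e(m := j)) = Dperp m e * (j + 1)"
    by (rule Dperp_upd)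
  also have "\<dots> \<le> w b0 * card R"
    using Dperp_e j(1) by (intro mult_le_mono) auto
  also have "\<dots> \<le> (\<Sum>b\<in>R. w b)"
    using sum_bounded_below[of R "w b0" w] w_R by (simp add: mult.commute)
  also have "\<dots> \<le> (\<Sum>b\<in>S m. w b)"
    using fin R(2) by (intro sum_mono2) auto
  also have "\<dots> = hamming_wt (points (Suc m) S) v"
    unfolding w_def by (rule hamming_wt_points_Suc_slices[OF fin, symmetric])
  finally show ?case
    using e_j inner by blast
qed

section \<open>Codes spanned by monomial vectors\<close>

lemma le_M1I:
  assumes "finite P" "x \<in> C1 - C2" "\<And>x. x \<in> C1 - C2 \<Longrightarrow> k \<le> hamming_wt P x"
  shows "k \<le> M1 P C1 C2"
proof -
  have "hamming_wt P ` (C1 - C2) \<subseteq> {..card P}"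
    unfolding hamming_wt_def using assms(1) by (auto intro: card_mono)
  then have "finite (hamming_wt P ` (C1 - C2))"
    by (rule finite_subset) simp
  moreover have "hamming_wt P ` (C1 - C2) \<noteq> {}"
    using assms(2) by blast
  ultimately show ?thesis
    unfolding M1_def using assms(3) by (simp add: Min_ge_iff)
qed

global_interpretation fun_vs: vector_space "vscale :: 'a::field \<Rightarrow> ('b \<Rightarrow> 'a) \<Rightarrow> 'b \<Rightarrow> 'a"
  by unfold_locales (simp_all add: vscale_def fun_eq_iff algebra_simps)

lemma sum_apply: "(\<Sum>x\<in>A. f x) y = (\<Sum>x\<in>A. f x y)"
  by (induction A rule: infinite_finite_induct) auto

locale product_grid =
  fixes m :: nat and S :: "nat \<Rightarrow> 'a::field set"
  assumes finite_S: "\<And>i. i < m \<Longrightarrow> finite (S i)"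
begin

abbreviation s :: "nat \<Rightarrow> nat" where
  "s \<equiv> \<lambda>i. card (S i)"

definition mon_vec :: "(nat \<Rightarrow> nat) \<Rightarrow> (nat \<Rightarrow> 'a) \<Rightarrow> 'a" where
  "mon_vec N = (\<lambda>\<alpha>. if \<alpha> \<in> points m S then evalMon m N \<alpha> else 0)"

lemma finite_Delta: "finite (Delta m s)"
  unfolding Delta_eq_grid by (rule finite_grid) simp

lemma card_points_eq_card_Delta: "card (points m S) = card (Delta m s)"
  unfolding points_eq_grid Delta_eq_grid using finite_S by (simp add: card_grid)

lemma sum_mon_vec:
  "(\<Sum>N\<in>L. vscale (c N) (mon_vec N))
     = (\<lambda>\<alpha>. if \<alpha> \<in> points m S then \<Sum>N\<in>L. c N * evalMon m N \<alpha> else 0)"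
proof
  fix \<alpha>
  show "(\<Sum>N\<in>L. vscale (c N) (mon_vec N)) \<alpha>
      = (if \<alpha> \<in> points m S then \<Sum>N\<in>L. c N * evalMon m N \<alpha> else 0)"
    by (cases "\<alpha> \<in> points m S") (simp_all add: sum_apply vscale_def mon_vec_def)
qed

lemma code_eq_range: "code m S L = range (\<lambda>c. \<Sum>N\<in>L. vscale (c N) (mon_vec N))"
  by (auto simp: code_def sum_mon_vec)

lemma sum_mon_vec_in_code: "(\<Sum>N\<in>L. vscale (c N) (mon_vec N)) \<in> code m S L"
  unfolding code_eq_range by (rule rangeI)

lemma zero_in_code: "0 \<in> code m S L"
  using sum_mon_vec_in_code[where c = "\<lambda>_. 0" and L = L] by simp

lemma mon_vec_in_code:
  assumes "finite L" "N \<in> L"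
  shows "mon_vec N \<in> code m S L"
proof -
  have delta: "(\<Sum>N'\<in>L. (if N' = N then 1 else 0) * evalMon m N' \<alpha>) = evalMon m N \<alpha>"
    for \<alpha> :: "nat \<Rightarrow> 'a"
    using assms by (simp add: if_distrib[of "\<lambda>x. x * _"] sum.delta' cong: if_cong)
  have "mon_vec N = (\<Sum>N'\<in>L. vscale (if N' = N then 1 else 0) (mon_vec N'))"
    unfolding sum_mon_vec unfolding mon_vec_def by (simp only: delta)
  then show ?thesis
    by (subst \<open>mon_vec N = _\<close>) (rule sum_mon_vec_in_code)
qed

lemma code_mono:
  assumes "finite L1" "L2 \<subseteq> L1"
  shows "code m S L2 \<subseteq> code m S L1"
proof
  fix x assume "x \<in> code m S L2"
  then obtain c where x: "x = (\<Sum>N\<in>L2. vscale (c N) (mon_vec N))"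
    unfolding code_eq_range by blast
  have "x = (\<Sum>N\<in>L1. vscale (if N \<in> L2 then c N else 0) (mon_vec N))"
    unfolding x using assms by (intro sum.mono_neutral_cong_left) auto
  then show "x \<in> code m S L1"
    using sum_mon_vec_in_code by simp
qed

lemma footprint_sum_mon_vec:
  assumes "L \<subseteq> Delta m s" "N0 \<in> L" "c N0 \<noteq> 0"
  shows "\<exists>N\<in>L. c N \<noteq> 0 \<and> Dmin m s N \<le> hamming_wt (points m S) (\<Sum>N\<in>L. vscale (c N) (mon_vec N))"
proof -
  define c' where "c' N = (if N \<in> L then c N else 0)" for N
  have "(\<lambda>\<alpha>. \<Sum>N\<in>Delta m s. c' N * evalMon m N \<alpha>) = (\<lambda>\<alpha>. \<Sum>N\<in>L. c N * evalMon m N \<alpha>)"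
    using assms(1) finite_Delta by (intro ext sum.mono_neutral_cong_right) (auto simp: c'_def)
  moreover have "hamming_wt (points m S) (\<Sum>N\<in>L. vscale (c N) (mon_vec N))
      = hamming_wt (points m S) (\<lambda>\<alpha>. \<Sum>N\<in>L. c N * evalMon m N \<alpha>)"
    unfolding hamming_wt_def sum_mon_vec by (rule arg_cong[where f = card]) auto
  moreover obtain N where "N \<in> Delta m s" "c' N \<noteq> 0"
    "Dmin m s N \<le> hamming_wt (points m S) (\<lambda>\<alpha>. \<Sum>N\<in>Delta m s. c' N * evalMon m N \<alpha>)"
    using footprint_bound[of m S s N0 c'] assms finite_S by (auto simp: c'_def)
  ultimately show ?thesis
    by (auto simp: c'_def split: if_splits)
qed

lemma sum_mon_vec_eq_0_iff:
  assumes "L \<subseteq> Delta m s"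
  shows "(\<Sum>N\<in>L. vscale (c N) (mon_vec N)) = 0 \<longleftrightarrow> (\<forall>N\<in>L. c N = 0)"
proof (rule iffI)
  assume sum_0: "(\<Sum>N\<in>L. vscale (c N) (mon_vec N)) = 0"
  show "\<forall>N\<in>L. c N = 0"
  proof (rule ballI, rule ccontr)
    fix N0 assume N0: "N0 \<in> L" "c N0 \<noteq> 0"
    from footprint_sum_mon_vec[of L N0 c, OF assms N0, unfolded sum_0]
    obtain N where "N \<in> L" "c N \<noteq> 0 \<and> Dmin m s N \<le> hamming_wt (points m S) (0 :: _ \<Rightarrow> 'a)"
      by (rule bexE) (rule that)
    moreover have "hamming_wt (points m S) (0 :: _ \<Rightarrow> 'a) = 0"
      by (simp add: hamming_wt_def)
    ultimately show False
      using Dmin_pos[of N m s] assms by fastforce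
  qed
qed (simp add: fun_vs.scale_zero_left)

lemma inj_on_mon_vec: "inj_on mon_vec (Delta m s)"
proof (rule inj_onI, rule ccontr)
  fix N1 N2
  assume N12: "N1 \<in> Delta m s" "N2 \<in> Delta m s" "mon_vec N1 = mon_vec N2" "N1 \<noteq> N2"
  let ?c = "\<lambda>N. if N = N1 then 1 else - 1 :: 'a"
  have "(\<Sum>N\<in>{N1, N2}. vscale (?c N) (mon_vec N)) = vscale 1 (mon_vec N1) + vscale (- 1) (mon_vec N2)"
    using N12(4) by simp
  also have "\<dots> = 0"
    unfolding N12(3) by (simp add: vscale_def fun_eq_iff)
  finally have "(\<Sum>N\<in>{N1, N2}. vscale (?c N) (mon_vec N)) = 0" .
  moreover have "{N1, N2} \<subseteq> Delta m s"
    using N12(1,2) by simp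
  ultimately have "?c N1 = 0"
    using sum_mon_vec_eq_0_iff[of "{N1, N2}" ?c] by blast
  then show False
    by simp
qed

lemma sum_mon_vec_image:
  assumes "L \<subseteq> Delta m s"
  shows "(\<Sum>v\<in>mon_vec ` L. vscale (u v) v) = (\<Sum>N\<in>L. vscale (u (mon_vec N)) (mon_vec N))"
  using sum.reindex[OF inj_on_subset[OF inj_on_mon_vec assms]] by simp

lemma independent_mon_vec:
  assumes "L \<subseteq> Delta m s"
  shows "fun_vs.independent (mon_vec ` L)"
proof -
  have "finite L"
    using assms finite_Delta by (rule finite_subset)
  show ?thesis
    unfolding fun_vs.dependent_finite[OF finite_imageI[OF \<open>finite L\<close>]] sum_mon_vec_image[OF assms]
  proof (rule notI, elim exE conjE)
    fix u :: "((nat \<Rightarrow> 'a) \<Rightarrow> 'a) \<Rightarrow> 'a"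
    assume "\<exists>v\<in>mon_vec ` L. u v \<noteq> 0" and sum_0: "(\<Sum>N\<in>L. vscale (u (mon_vec N)) (mon_vec N)) = 0"
    then obtain N where "N \<in> L" "u (mon_vec N) \<noteq> 0"
      by blast
    then show False
      using sum_mon_vec_eq_0_iff[OF assms, of "\<lambda>N. u (mon_vec N)"] sum_0 by simp
  qed
qed

lemma span_mon_vec:
  assumes "L \<subseteq> Delta m s"
  shows "fun_vs.span (mon_vec ` L) = code m S L"
proof -
  have fin: "finite L"
    using assms finite_Delta by (rule finite_subset)
  have "range (\<lambda>u. \<Sum>N\<in>L. vscale (u (mon_vec N)) (mon_vec N))
      = range (\<lambda>c. \<Sum>N\<in>L. vscale (c N) (mon_vec N))"
  proof (intro equalityI subsetI)
    fix x assume "x \<in> range (\<lambda>c. \<Sum>N\<in>L. vscale (c N) (mon_vec N))"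
    then obtain c where x: "x = (\<Sum>N\<in>L. vscale (c N) (mon_vec N))" by blast
    have "x = (\<Sum>N\<in>L. vscale (c (inv_into L mon_vec (mon_vec N))) (mon_vec N))"
      unfolding x using inj_on_subset[OF inj_on_mon_vec assms] by (intro sum.cong) auto
    then show "x \<in> range (\<lambda>u. \<Sum>N\<in>L. vscale (u (mon_vec N)) (mon_vec N))"
      by (rule range_eqI[where x = "\<lambda>v. c (inv_into L mon_vec v)"])
  qed auto
  then show ?thesis
    using fin by (simp add: fun_vs.span_finite sum_mon_vec_image[OF assms] code_eq_range)
qed

lemma vdim_code:
  assumes "L \<subseteq> Delta m s"
  shows "vdim (code m S L) = card L"
  unfolding vdim_def span_mon_vec[OF assms, symmetric]
  using fun_vs.dim_span_eq_card_independent[OF independent_mon_vec[OF assms]]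
    card_image[OF inj_on_subset[OF inj_on_mon_vec assms]] by simp

lemma hamming_wt_code_ge:
  assumes "L \<subseteq> Delta m s" "\<And>N. N \<in> L \<Longrightarrow> \<delta> \<le> Dmin m s N"
    and "x \<in> code m S L" "x \<noteq> 0"
  shows "\<delta> \<le> hamming_wt (points m S) x"
proof -
  obtain c where x: "x = (\<Sum>N\<in>L. vscale (c N) (mon_vec N))"
    using assms(3) unfolding code_eq_range by blast
  then obtain N0 where "N0 \<in> L" "c N0 \<noteq> 0"
    using assms(4) sum_mon_vec_eq_0_iff[OF assms(1), of c] by blast
  from footprint_sum_mon_vec[of L N0 c, OF assms(1) this, folded x]
  obtain N where "N \<in> L" "c N \<noteq> 0 \<and> Dmin m s N \<le> hamming_wt (points m S) x"
    by (rule bexE) (rule that)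
  then show ?thesis
    using assms(2) order_trans by blast
qed

lemma inner_sum_mon_vec:
  "(\<Sum>\<alpha>\<in>points m S. v \<alpha> * (\<Sum>N\<in>L. vscale (c N) (mon_vec N)) \<alpha>)
     = (\<Sum>N\<in>L. c N * (\<Sum>\<alpha>\<in>points m S. v \<alpha> * evalMon m N \<alpha>))"
proof -
  have "(\<Sum>\<alpha>\<in>points m S. v \<alpha> * (\<Sum>N\<in>L. vscale (c N) (mon_vec N)) \<alpha>)
      = (\<Sum>\<alpha>\<in>points m S. \<Sum>N\<in>L. c N * (v \<alpha> * evalMon m N \<alpha>))"
    by (intro sum.cong) (simp_all add: sum_mon_vec sum_distrib_left mult_ac)
  then show ?thesis
    by (simp add: sum.swap[of _ L] sum_distrib_left)
qed

lemma dual_code_iff: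
  assumes "finite L"
  shows "v \<in> dual_code (points m S) (code m S L) \<longleftrightarrow>
    (\<forall>\<alpha>. \<alpha> \<notin> points m S \<longrightarrow> v \<alpha> = 0) \<and> (\<forall>e\<in>L. (\<Sum>\<alpha>\<in>points m S. v \<alpha> * evalMon m e \<alpha>) = 0)"
proof
  assume v: "v \<in> dual_code (points m S) (code m S L)"
  have "(\<Sum>\<alpha>\<in>points m S. v \<alpha> * evalMon m e \<alpha>) = (\<Sum>\<alpha>\<in>points m S. v \<alpha> * mon_vec e \<alpha>)" for e
    by (rule sum.cong) (simp_all add: mon_vec_def)
  with v show "(\<forall>\<alpha>. \<alpha> \<notin> points m S \<longrightarrow> v \<alpha> = 0) \<and>
      (\<forall>e\<in>L. (\<Sum>\<alpha>\<in>points m S. v \<alpha> * evalMon m e \<alpha>) = 0)"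
    using mon_vec_in_code[OF assms] by (simp add: dual_code_def)
next
  assume "(\<forall>\<alpha>. \<alpha> \<notin> points m S \<longrightarrow> v \<alpha> = 0) \<and>
      (\<forall>e\<in>L. (\<Sum>\<alpha>\<in>points m S. v \<alpha> * evalMon m e \<alpha>) = 0)"
  then show "v \<in> dual_code (points m S) (code m S L)"
    by (auto simp: dual_code_def code_eq_range inner_sum_mon_vec)
qed

lemma dual_footprint:
  fixes v :: "(nat \<Rightarrow> 'a) \<Rightarrow> 'a"
  assumes "\<forall>\<alpha>. \<alpha> \<notin> points m S \<longrightarrow> v \<alpha> = 0" "v \<noteq> 0"
  shows "\<exists>e\<in>Delta m s. (\<Sum>\<alpha>\<in>points m S. v \<alpha> * evalMon m e \<alpha>) \<noteq> 0 \<and>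
           Dperp m e \<le> hamming_wt (points m S) v"
proof -
  obtain \<alpha>0 where "v \<alpha>0 \<noteq> 0"
    using assms(2) by (auto simp: fun_eq_iff)
  moreover from this have "\<alpha>0 \<in> points m S"
    using assms(1) by blast
  ultimately show ?thesis
    using dual_footprint_bound[of m S s \<alpha>0 v] finite_S by simp
qed

lemma hamming_wt_dual_code_ge:
  assumes "L \<subseteq> Delta m s" "\<And>e. e \<in> Delta m s \<Longrightarrow> e \<notin> L \<Longrightarrow> \<delta> \<le> Dperp m e"
    and "v \<in> dual_code (points m S) (code m S L)" "v \<noteq> 0"
  shows "\<delta> \<le> hamming_wt (points m S) v"
proof -
  have "finite L"
    using assms(1) finite_Delta by (rule finite_subset)
  then have v: "\<forall>\<alpha>. \<alpha> \<notin> points m S \<longrightarrow> v \<alpha> = 0"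
      "\<forall>e\<in>L. (\<Sum>\<alpha>\<in>points m S. v \<alpha> * evalMon m e \<alpha>) = 0"
    using assms(3) dual_code_iff by blast+
  from dual_footprint[OF v(1) assms(4)]
  obtain e where "e \<in> Delta m s"
    "(\<Sum>\<alpha>\<in>points m S. v \<alpha> * evalMon m e \<alpha>) \<noteq> 0 \<and> Dperp m e \<le> hamming_wt (points m S) v"
    by (rule bexE) (rule that)
  then show ?thesis
    using v(2) assms(2) order_trans by blast
qed


lemma code_psubset:
  assumes "L2 \<subset> L1" "L1 \<subseteq> Delta m s"
  shows "code m S L2 \<subset> code m S L1"
proof -
  have "finite L1"
    using assms(2) finite_Delta by (rule finite_subset)
  then have "card L2 < card L1"
    using assms(1) by (rule psubset_card_mono)
  moreover have "vdim (code m S L1) = card L1" "vdim (code m S L2) = card L2"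
    using assms by (auto intro!: vdim_code)
  ultimately show ?thesis
    using code_mono[OF \<open>finite L1\<close> psubset_imp_subset[OF assms(1)]] by auto
qed

lemma M1_code_ge:
  assumes "L2 \<subset> L1" "L1 \<subseteq> Delta m s" "\<And>N. N \<in> L1 \<Longrightarrow> \<delta> \<le> Dmin m s N"
  shows "\<delta> \<le> M1 (points m S) (code m S L1) (code m S L2)"
proof -
  obtain x where x: "x \<in> code m S L1 - code m S L2"
    using code_psubset[OF assms(1,2)] by blast
  have "\<delta> \<le> hamming_wt (points m S) y" if "y \<in> code m S L1 - code m S L2" for y
    using that zero_in_code[of L2] by (intro hamming_wt_code_ge[OF assms(2,3)]) auto
  from le_M1I[OF finite_points[OF finite_S] x this] show ?thesis .
qed
end

section \<open>Separating vectors of the dual codes\<close>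

lemma card_vanishing_outside:
  assumes "finite P"
  shows "card {v :: 'b \<Rightarrow> 'a::{finite,zero}. \<forall>x. x \<notin> P \<longrightarrow> v x = 0} = card (UNIV :: 'a set) ^ card P"
proof -
  have "bij_betw (\<lambda>v. restrict v P) {v :: 'b \<Rightarrow> 'a. \<forall>x. x \<notin> P \<longrightarrow> v x = 0} (P \<rightarrow>\<^sub>E UNIV)"
    by (rule bij_betw_byWitness[where f' = "\<lambda>g x. if x \<in> P then g x else 0"])
       (auto simp: fun_eq_iff PiE_def extensional_def)
  then show ?thesis
    using assms by (simp add: bij_betw_same_card card_PiE)
qed

lemma ex_dual_vector:
  fixes S :: "nat \<Rightarrow> 'a::{finite,field} set"
  shows "\<exists>v. (\<forall>\<alpha>. \<alpha> \<notin> points m S \<longrightarrow> v \<alpha> = 0) \<and>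
    (\<forall>e\<in>Delta m (\<lambda>i. card (S i)). (\<Sum>\<alpha>\<in>points m S. v \<alpha> * evalMon m e \<alpha>) = (if e = N then 1 else 0))"
proof -
  interpret product_grid m S
    by unfold_locales simp
  \<comment> \<open>\<open>\<Phi>\<close> is injective by the dual footprint bound, hence onto by counting.\<close>
  define V where "V = {v :: (nat \<Rightarrow> 'a) \<Rightarrow> 'a. \<forall>\<alpha>. \<alpha> \<notin> points m S \<longrightarrow> v \<alpha> = 0}"
  define \<Phi> where "\<Phi> v = restrict (\<lambda>e. \<Sum>\<alpha>\<in>points m S. v \<alpha> * evalMon m e \<alpha>) (Delta m s)"
    for v :: "(nat \<Rightarrow> 'a) \<Rightarrow> 'a"
  have "inj_on \<Phi> V"
  proof (rule inj_onI, rule ccontr)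
    fix v w assume vw: "v \<in> V" "w \<in> V" "\<Phi> v = \<Phi> w" "v \<noteq> w"
    let ?d = "\<lambda>\<alpha>. v \<alpha> - w \<alpha>"
    have "\<forall>\<alpha>. \<alpha> \<notin> points m S \<longrightarrow> ?d \<alpha> = 0" "?d \<noteq> 0"
      using vw by (auto simp: V_def fun_eq_iff)
    from dual_footprint[OF this]
    obtain e where e: "e \<in> Delta m s"
      "(\<Sum>\<alpha>\<in>points m S. ?d \<alpha> * evalMon m e \<alpha>) \<noteq> 0 \<and> Dperp m e \<le> hamming_wt (points m S) ?d"
      by (rule bexE) (rule that)
    have "\<Phi> v e = \<Phi> w e"
      using vw(3) by simp
    then have "(\<Sum>\<alpha>\<in>points m S. ?d \<alpha> * evalMon m e \<alpha>) = 0"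
      using e(1) by (simp add: \<Phi>_def left_diff_distrib sum_subtractf)
    with e(2) show False
      by simp
  qed
  moreover have "\<Phi> ` V \<subseteq> Delta m s \<rightarrow>\<^sub>E UNIV"
    by (auto simp: \<Phi>_def)
  moreover have "card V = card (UNIV :: 'a set) ^ card (points m S)"
    unfolding V_def by (rule card_vanishing_outside[OF finite_points[OF finite_S]])
  then have "card (Delta m s \<rightarrow>\<^sub>E (UNIV :: 'a set)) = card V"
    using finite_Delta by (simp add: card_PiE card_points_eq_card_Delta)
  ultimately have "\<Phi> ` V = Delta m s \<rightarrow>\<^sub>E UNIV"
    using finite_Delta by (intro card_subset_eq finite_PiE) (auto simp: card_image)
  moreover have "restrict (\<lambda>e. if e = N then 1 else 0 :: 'a) (Delta m s) \<in> Delta m s \<rightarrow>\<^sub>E UNIV"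
    by simp
  ultimately have "restrict (\<lambda>e. if e = N then 1 else 0) (Delta m s) \<in> \<Phi> ` V"
    by simp
  then obtain v where v: "restrict (\<lambda>e. if e = N then 1 else 0) (Delta m s) = \<Phi> v" "v \<in> V"
    by (rule imageE)
  have "(\<Sum>\<alpha>\<in>points m S. v \<alpha> * evalMon m e \<alpha>) = (if e = N then 1 else 0)" if "e \<in> Delta m s" for e
    using fun_cong[OF v(1), of e] that by (simp add: \<Phi>_def)
  with v(2) show ?thesis
    unfolding V_def by blast
qed

lemma M1_dual_code_ge:
  fixes S :: "nat \<Rightarrow> 'a::{finite,field} set"
  assumes "L2 \<subset> L1" "L1 \<subseteq> Delta m (\<lambda>i. card (S i))"
    and "\<And>e. e \<in> Delta m (\<lambda>i. card (S i)) \<Longrightarrow> e \<notin> L2 \<Longrightarrow> \<delta> \<le> Dperp m e"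
  shows "\<delta> \<le> M1 (points m S) (dual_code (points m S) (code m S L2)) (dual_code (points m S) (code m S L1))"
proof -
  interpret product_grid m S
    by unfold_locales simp
  have finite_L1: "finite L1"
    using assms(2) finite_Delta by (rule finite_subset)
  then have finite_L2: "finite L2"
    by (rule finite_subset[OF psubset_imp_subset[OF assms(1)]])
  obtain N0 where N0: "N0 \<in> L1" "N0 \<notin> L2"
    using assms(1) by blast
  then obtain v where v_P: "\<forall>\<alpha>. \<alpha> \<notin> points m S \<longrightarrow> v \<alpha> = 0"
    and v_Delta: "\<forall>e\<in>Delta m s. (\<Sum>\<alpha>\<in>points m S. v \<alpha> * evalMon m e \<alpha>) = (if e = N0 then 1 else 0)"
    using ex_dual_vector[where N = N0] by blast
  have v_L2: "v \<in> dual_code (points m S) (code m S L2)"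
    unfolding dual_code_iff[OF finite_L2] using v_P v_Delta N0(2) assms(1,2) by auto
  have "(\<Sum>\<alpha>\<in>points m S. v \<alpha> * evalMon m N0 \<alpha>) \<noteq> 0"
    using v_Delta N0(1) assms(2) by auto
  then have v_L1: "v \<notin> dual_code (points m S) (code m S L1)"
    unfolding dual_code_iff[OF finite_L1] using N0(1) by blast
  have "\<delta> \<le> hamming_wt (points m S) w"
    if "w \<in> dual_code (points m S) (code m S L2) - dual_code (points m S) (code m S L1)" for w
    using that assms(1,2)
    by (intro hamming_wt_dual_code_ge[OF _ assms(3)]) (auto simp: dual_code_def)
  from le_M1I[OF finite_points[OF finite_S] _ this] v_L1 v_L2 show ?thesis
    by blast
qed

theorem mainTheorem2:
  fixes m :: nat and S :: "nat \<Rightarrow> 'a::{finite,field} set"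
    and \<delta> \<delta>perp :: nat
  assumes S_ne: "\<forall>i<m. S i \<noteq> {}"
    and pos: "\<delta> > 0" "\<delta>perp > 0"
  defines "P \<equiv> points m S"
    and "L1 \<equiv> {N \<in> Delta m (\<lambda>i. card (S i)). Dmin m (\<lambda>i. card (S i)) N \<ge> \<delta>}"
    and "L2 \<equiv> {N \<in> Delta m (\<lambda>i. card (S i)). Dperp m N < \<delta>perp}"
  assumes sub: "L2 \<subset> L1"
  shows "code m S L2 \<subset> code m S L1
    \<and> vdim (code m S L1) = vdim (code m S L2) + (card L1 - card L2)
    \<and> M1 P (code m S L1) (code m S L2) \<ge> \<delta>
    \<and> M1 P (dual_code P (code m S L2)) (dual_code P (code m S L1)) \<ge> \<delta>perp"
proof -
  interpret product_grid m S
    by unfold_locales simp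
  have L1_sub: "L1 \<subseteq> Delta m s" and L2_sub: "L2 \<subseteq> Delta m s"
    unfolding L1_def L2_def by auto
  have "card L2 \<le> card L1"
    using sub L1_sub finite_Delta by (meson card_mono finite_subset psubset_imp_subset)
  moreover have "\<delta> \<le> M1 P (code m S L1) (code m S L2)"
    unfolding P_def using sub L1_sub by (rule M1_code_ge) (simp add: L1_def)
  moreover have "\<delta>perp \<le> M1 P (dual_code P (code m S L2)) (dual_code P (code m S L1))"
    unfolding P_def using sub L1_sub by (rule M1_dual_code_ge) (simp add: L2_def not_less)
  ultimately show ?thesis
    using code_psubset[OF sub L1_sub] vdim_code[OF L1_sub] vdim_code[OF L2_sub] by simp
qed

end
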